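(* Let $n,k \in \mathbb{N}$ with $k\leq n/2$. Then the binomial language $B_{n,k}=\{w\in\{0,1\}^n : |w|_1=k\}$ requires regular expressions of length $\mathrm{rpn}(B_{n,k}) \geq n k^{\Omega(\log k)}$.
   Context: $|w|_1$ is the number of ones in $w$. Regular expressions are built from $\epsilon$ and letters by union and concatenation (no $\emptyset$); $\mathrm{rpn}(L)$ is the minimum number of syntax-tree nodes of an expression describing $L$. Logarithms are base 2. *)

theory Defs
  imports Complex_Main
begin

text \<open>Regular expressions over the binary alphabet {0,1} (letters are booleans,
  True = 1), built from epsilon and letters by union and concatenation only.\<close>
datatype rexp = Eps | Letter bool | Plus rexp rexp | Times rexp rexp

fun lang :: "rexp \<Rightarrow> bool list set" where
  "lang Eps = {[]}"
| "lang (Letter a) = {[a]}"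
| "lang (Plus r s) = lang r \<union> lang s"
| "lang (Times r s) = {u @ v | u v. u \<in> lang r \<and> v \<in> lang s}"

fun nodes :: "rexp \<Rightarrow> nat" where
  "nodes Eps = 1"
| "nodes (Letter a) = 1"
| "nodes (Plus r s) = nodes r + nodes s + 1"
| "nodes (Times r s) = nodes r + nodes s + 1"

definition rpn :: "bool list set \<Rightarrow> nat" where
  "rpn L = (LEAST m. \<exists>r. lang r = L \<and> nodes r = m)"

definition count_ones :: "bool list \<Rightarrow> nat" where
  "count_ones w = length (filter (\<lambda>x. x) w)"

definition binomial_lang :: "nat \<Rightarrow> nat \<Rightarrow> bool list set" where
  "binomial_lang n k = {w. length w = n \<and> count_ones w = k}"

end

theory Submission
  imports Defs "HOL-Real_Asymp.Real_Asymp"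
begin

text \<open>
  Fix a regular expression r with lang r \<subseteq> B(m,j) = binomial_lang m j, so that its density
  card (lang r) / (m choose j) is at most 1. We show that
  G(m,j) * density \<le> nodes r for a weight G(m,j) = m * exp (c (ln t)^2), t = min j (m - j),
  by induction on r: unions are handled by subadditivity, and for a
  concatenation lang r \<subseteq> B(m1,j1), lang s \<subseteq> B(m2,j2) the densities multiply, so the step
  reduces to the purely numerical inequality
  G(m1+m2, j1+j2) (m1 choose j1)(m2 choose j2) \<le> (G(m1,j1) + G(m2,j2) + 1) ((m1+m2) choose (j1+j2)).
  The Vandermonde sum on the right gains a factor over its single term
  (m1 choose j1)(m2 choose j2): a factor exponential in the deviation of the blocks from
  the common ratio when that deviation is large, a factor t^(1/4) from a window of
  nearby terms when both blocks are balanced, and a factor 3/2 from one neighbouring term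
  when one block is tiny. In each regime this gain pays for the growth of G.
  Applied to a minimal expression for B(n,k) (density 1) this yields rpn \<ge> n k^(c log k).
\<close>

section \<open>Binomial languages and regular expressions\<close>

lemma count_ones_Nil [simp]: "count_ones [] = 0"
  by (simp add: count_ones_def)

lemma count_ones_Cons [simp]: "count_ones (a # w) = (if a then Suc (count_ones w) else count_ones w)"
  by (simp add: count_ones_def)

lemma count_ones_append [simp]: "count_ones (u @ v) = count_ones u + count_ones v"
  by (simp add: count_ones_def)

lemma count_ones_le_length: "count_ones w \<le> length w"
  by (simp add: count_ones_def)

lemma lang_Times_eq_image: "lang (Times r s) = (\<lambda>(u, v). u @ v) ` (lang r \<times> lang s)"
  by auto

lemma finite_lang: "finite (lang r)"
  by (induction r) (simp_all add: lang_Times_eq_image del: lang.simps(4))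

lemma lang_nonempty: "lang r \<noteq> {}"
  by (induction r) auto

lemma binomial_lang_Suc:
  "binomial_lang (Suc m) j =
     (\<lambda>w. False # w) ` binomial_lang m j \<union>
     (if j = 0 then {} else (\<lambda>w. True # w) ` binomial_lang m (j - 1))"
proof (intro set_eqI iffI)
  fix w assume "w \<in> binomial_lang (Suc m) j"
  then obtain a v where "w = a # v" "length v = m" "count_ones w = j"
    unfolding binomial_lang_def by (cases w) auto
  then show "w \<in> (\<lambda>w. False # w) ` binomial_lang m j \<union>
      (if j = 0 then {} else (\<lambda>w. True # w) ` binomial_lang m (j - 1))"
    by (cases a) (auto simp: binomial_lang_def)
qed (auto simp: binomial_lang_def split: if_splits)

lemma finite_binomial_lang: "finite (binomial_lang m j)"
proof (rule finite_subset)
  show "binomial_lang m j \<subseteq> {w. set w \<subseteq> UNIV \<and> length w = m}"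
    by (auto simp: binomial_lang_def)
qed (rule finite_lists_length_eq, simp)

lemma card_binomial_lang: "card (binomial_lang m j) = m choose j"
proof (induction m arbitrary: j)
  case 0
  have "binomial_lang 0 j = (if j = 0 then {[]} else {})"
    by (auto simp: binomial_lang_def)
  then show ?case by simp
next
  case (Suc m)
  show ?case
  proof (cases j)
    case 0
    then show ?thesis
      using Suc.IH[of 0] by (simp add: binomial_lang_Suc card_image)
  next
    case (Suc i)
    have "card (binomial_lang (Suc m) j) =
        card ((\<lambda>w. False # w) ` binomial_lang m j) + card ((\<lambda>w. True # w) ` binomial_lang m i)"
      unfolding binomial_lang_Suc using Suc
      by (subst card_Un_disjoint) (auto simp: finite_binomial_lang)
    also have "\<dots> = (m choose j) + (m choose i)"
      using Suc.IH by (simp add: card_image)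
    finally show ?thesis using Suc by simp
  qed
qed

lemma binomial_lang_nonempty: "j \<le> m \<Longrightarrow> binomial_lang m j \<noteq> {}"
  by (auto simp: binomial_lang_def count_ones_def
      intro!: exI[of _ "replicate j True @ replicate (m - j) False"])

lemma le_of_lang_subset_binomial_lang: "lang r \<subseteq> binomial_lang m j \<Longrightarrow> j \<le> m"
  using lang_nonempty[of r] count_ones_le_length by (fastforce simp: binomial_lang_def)

lemma card_concat:
  assumes "\<And>u. u \<in> A \<Longrightarrow> length u = l" "finite A" "finite B"
  shows "card {u @ v | u v. u \<in> A \<and> v \<in> B} = card A * card B"
proof -
  have "{u @ v | u v. u \<in> A \<and> v \<in> B} = (\<lambda>(u, v). u @ v) ` (A \<times> B)"
    by auto
  moreover have "inj_on (\<lambda>(u, v). u @ v) (A \<times> B)"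
    by (rule inj_onI) (use assms(1) in auto)
  ultimately show ?thesis
    by (simp add: card_image card_cartesian_product)
qed

lemma lang_Times_subset_binomial_lang:
  assumes "lang (Times r s) \<subseteq> binomial_lang m j"
  obtains m1 j1 m2 j2 where "lang r \<subseteq> binomial_lang m1 j1" "lang s \<subseteq> binomial_lang m2 j2"
    "m = m1 + m2" "j = j1 + j2"
proof -
  obtain u0 v0 where u0: "u0 \<in> lang r" and v0: "v0 \<in> lang s"
    using lang_nonempty by blast
  have uv: "u @ v \<in> binomial_lang m j" if "u \<in> lang r" "v \<in> lang s" for u v
    using assms that by auto
  have "lang r \<subseteq> binomial_lang (length u0) (count_ones u0)"
    using uv[OF _ v0] uv[OF u0 v0] by (auto simp: binomial_lang_def)
  moreover have "lang s \<subseteq> binomial_lang (length v0) (count_ones v0)"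
    using uv[OF u0] uv[OF u0 v0] by (auto simp: binomial_lang_def)
  moreover have "m = length u0 + length v0" "j = count_ones u0 + count_ones v0"
    using uv[OF u0 v0] by (auto simp: binomial_lang_def)
  ultimately show ?thesis using that by blast
qed

fun rexp_of_word :: "bool list \<Rightarrow> rexp" where
  "rexp_of_word [] = Eps"
| "rexp_of_word (a # w) = Times (Letter a) (rexp_of_word w)"

lemma lang_rexp_of_word: "lang (rexp_of_word w) = {w}"
  by (induction w) auto

lemma ex_rexp_lang: "finite L \<Longrightarrow> L \<noteq> {} \<Longrightarrow> \<exists>r. lang r = L"
proof (induction L rule: finite_ne_induct)
  case (singleton w)
  then show ?case using lang_rexp_of_word by blast
next
  case (insert w L)
  then obtain r where "lang r = L" by blast
  then have "lang (Plus (rexp_of_word w) r) = insert w L"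
    by (simp add: lang_rexp_of_word)
  then show ?case by blast
qed

lemma rpn_attained:
  assumes "finite L" "L \<noteq> {}"
  obtains r where "lang r = L" "nodes r = rpn L"
proof -
  have "\<exists>m r. lang r = L \<and> nodes r = m"
    using ex_rexp_lang[OF assms] by blast
  then have "\<exists>r. lang r = L \<and> nodes r = rpn L"
    unfolding rpn_def using LeastI_ex[of "\<lambda>m. \<exists>r. lang r = L \<and> nodes r = m"] by blast
  then show ?thesis using that by blast
qed

section \<open>The density bound\<close>

text \<open>
  The concatenation step of the induction below: a \<le> A and b \<le> B are the cardinalities
  of the two factor languages and of the binomial languages containing them.\<close>
lemma concat_density_step:
  fixes a b A B g g1 g2 n1 n2 C :: real
  assumes ab: "0 \<le> a" "a \<le> A" "0 \<le> b" "b \<le> B" and AB: "0 < A" "0 < B"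
    and n: "0 \<le> n1" "0 \<le> n2" "0 \<le> C"
    and IH1: "g1 * a \<le> n1 * A" and IH2: "g2 * b \<le> n2 * B"
    and concat: "g * A * B \<le> (g1 + g2 + 1) * C"
  shows "g * (a * b) \<le> (n1 + n2 + 1) * C"
proof -
  have "g1 * a * b \<le> n1 * A * b"
    using IH1 ab by (intro mult_right_mono) auto
  also have "\<dots> \<le> n1 * A * B"
    using ab AB n by (intro mult_left_mono) auto
  finally have 1: "g1 * a * b \<le> n1 * A * B" .
  have "g2 * b * a \<le> n2 * B * a"
    using IH2 ab by (intro mult_right_mono) auto
  also have "\<dots> \<le> n2 * B * A"
    using ab AB n by (intro mult_left_mono) auto
  finally have 2: "g2 * a * b \<le> n2 * A * B" by (simp only: ac_simps)
  have "a * b \<le> A * B"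
    using ab by (intro mult_mono) auto
  with 1 2 have sum: "(g1 + g2 + 1) * (a * b) \<le> (n1 + n2 + 1) * (A * B)"
    by (simp add: algebra_simps)
  have "(g * (a * b)) * (A * B) = (g * A * B) * (a * b)"
    by (simp add: ac_simps)
  also have "\<dots> \<le> ((g1 + g2 + 1) * C) * (a * b)"
    using concat ab by (intro mult_right_mono) auto
  also have "\<dots> = C * ((g1 + g2 + 1) * (a * b))"
    by (simp add: ac_simps)
  also have "\<dots> \<le> C * ((n1 + n2 + 1) * (A * B))"
    using sum n by (intro mult_left_mono) auto
  finally show ?thesis
    using AB by (simp add: ac_simps mult_le_cancel_right)
qed

lemma weight_mult_card_lang_le:
  fixes G :: "nat \<Rightarrow> nat \<Rightarrow> real"
  assumes G_Eps: "G 0 0 \<le> 1" and G_Letter: "\<And>j. j \<le> 1 \<Longrightarrow> G 1 j \<le> 1"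
    and G_nonneg: "\<And>m j. 0 \<le> G m j"
    and G_concat: "\<And>m1 j1 m2 j2. j1 \<le> m1 \<Longrightarrow> j2 \<le> m2 \<Longrightarrow>
       G (m1 + m2) (j1 + j2) * real (m1 choose j1) * real (m2 choose j2)
       \<le> (G m1 j1 + G m2 j2 + 1) * real ((m1 + m2) choose (j1 + j2))"
  shows "lang r \<subseteq> binomial_lang m j \<Longrightarrow>
    G m j * real (card (lang r)) \<le> real (nodes r) * real (m choose j)"
proof (induction r arbitrary: m j)
  case Eps
  then have "m = 0" "j = 0" by (auto simp: binomial_lang_def)
  then show ?case using G_Eps by simp
next
  case (Letter a)
  then have "m = 1" "j \<le> 1" by (auto simp: binomial_lang_def split: if_splits)
  then show ?case using G_Letter[of j] by (cases j) auto
next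
  case (Plus r s)
  then have "G m j * real (card (lang r)) \<le> real (nodes r) * real (m choose j)"
    and "G m j * real (card (lang s)) \<le> real (nodes s) * real (m choose j)" by auto
  moreover have "G m j * real (card (lang (Plus r s))) \<le>
      G m j * (real (card (lang r)) + real (card (lang s)))"
    using G_nonneg card_Un_le[of "lang r" "lang s"]
    by (intro mult_left_mono) (simp_all flip: of_nat_add)
  ultimately show ?case by (simp add: algebra_simps)
next
  case (Times r s)
  obtain m1 j1 m2 j2 where split: "lang r \<subseteq> binomial_lang m1 j1" "lang s \<subseteq> binomial_lang m2 j2"
    "m = m1 + m2" "j = j1 + j2"
    using lang_Times_subset_binomial_lang[OF Times.prems] .
  then have le: "j1 \<le> m1" "j2 \<le> m2"
    using le_of_lang_subset_binomial_lang by auto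
  have card_le: "card (lang r) \<le> m1 choose j1" "card (lang s) \<le> m2 choose j2"
    using card_mono[OF finite_binomial_lang split(1)] card_mono[OF finite_binomial_lang split(2)]
    by (simp_all add: card_binomial_lang)
  have "card (lang (Times r s)) = card (lang r) * card (lang s)"
    unfolding lang.simps
    by (rule card_concat[where l = m1]) (use split(1) finite_lang in \<open>auto simp: binomial_lang_def\<close>)
  moreover have "G m j * (real (card (lang r)) * real (card (lang s))) \<le>
      (real (nodes r) + real (nodes s) + 1) * real (m choose j)"
  proof (rule concat_density_step)
    show "G m j * real (m1 choose j1) * real (m2 choose j2) \<le>
        (G m1 j1 + G m2 j2 + 1) * real (m choose j)"
      using G_concat[OF le] split by simp
  qed (use Times.IH split card_le le in auto)
  ultimately show ?case by (simp add: add_ac)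
qed

section \<open>Gains in the Vandermonde convolution\<close>

lemma binomial_Suc_mult:
  assumes "k \<le> n"
  shows "real (n choose Suc k) * (real k + 1) = real (n choose k) * (real n - real k)"
proof -
  have "(n choose Suc k) * Suc k = (n choose k) * (n - k)"
    by (metis binomial_absorb_comp binomial_absorption mult.commute)
  then have "real ((n choose Suc k) * Suc k) = real ((n choose k) * (n - k))"
    by (simp only:)
  then show ?thesis using assms by (simp add: of_nat_diff algebra_simps)
qed

lemma sum_vandermonde_terms_le:
  assumes "S \<subseteq> {..j}"
  shows "(\<Sum>i\<in>S. real (m1 choose i) * real (m2 choose (j - i))) \<le> real ((m1 + m2) choose j)"
proof -
  have "(\<Sum>i\<in>S. real (m1 choose i) * real (m2 choose (j - i)))
      \<le> (\<Sum>i\<le>j. real (m1 choose i) * real (m2 choose (j - i)))"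
    using assms by (intro sum_mono2) auto
  also have "\<dots> = real ((m1 + m2) choose j)"
    by (simp flip: vandermonde of_nat_mult)
  finally show ?thesis .
qed

lemma vandermonde_term_le:
  "i \<le> j \<Longrightarrow> real (m1 choose i) * real (m2 choose (j - i)) \<le> real ((m1 + m2) choose j)"
  using sum_vandermonde_terms_le[of "{i}" j m1 m2] by simp

lemma vandermonde_two_terms_le:
  "i < i' \<Longrightarrow> i' \<le> j \<Longrightarrow>
    real (m1 choose i) * real (m2 choose (j - i)) + real (m1 choose i') * real (m2 choose (j - i'))
    \<le> real ((m1 + m2) choose j)"
  using sum_vandermonde_terms_le[of "{i, i'}" j m1 m2] by simp

lemma binomial_mult_le_binomial_add:
  "real ((x1 + y1) choose x1) * real ((x2 + y2) choose x2) \<le> real ((x1 + y1 + x2 + y2) choose (x1 + x2))"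
  using vandermonde_term_le[of x1 "x1 + x2" "x1 + y1" "x2 + y2"] by (simp add: add.assoc)

lemma binomial_blocks_commute:
  "(x2 + y2 + x1 + y1) choose (x2 + x1) = (x1 + y1 + x2 + y2) choose (x1 + x2)"
  by (simp add: ac_simps)

lemma shift_ratio_le:
  fixes x M D d :: real
  assumes "M \<le> x" "d + 1 \<le> D" "D \<le> M" "0 \<le> d"
  shows "(M + 1 - D) / (M + D) \<le> (x - d) / (x + d + 1)"
proof -
  have "(x - d) * (M + D) - (M + 1 - D) * (x + d + 1) = (x - M) * (2*D - 1) + (D - 1 - d) * (2*M + 1)"
    by (simp add: algebra_simps)
  moreover have "(x - M) * (2*D - 1) \<ge> 0" "(D - 1 - d) * (2*M + 1) \<ge> 0"
    using assms by auto
  ultimately have "(M + 1 - D) * (x + d + 1) \<le> (x - d) * (M + D)"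
    by linarith
  moreover have "M + D > 0" "x + d + 1 > 0" using assms by auto
  ultimately show ?thesis by (simp add: divide_simps)
qed

text \<open>Log-concavity of the binomial coefficients near the centre, with an explicit ratio.\<close>
lemma binomial_sq_le_shifted_mult:
  fixes x y D M d :: nat
  defines "r \<equiv> (real M + 1 - real D) / (real M + real D)"
  assumes "M \<le> x" "M \<le> y" "D \<le> M" "1 \<le> M" "d \<le> D"
  shows "real ((x+y) choose x) ^ 2 * r ^ (2*d) \<le> real ((x+y) choose (x+d)) * real ((x+y) choose (x-d))"
  using \<open>d \<le> D\<close>
proof (induction d)
  case 0
  then show ?case by (simp add: power2_eq_square)
next
  case (Suc d)
  have r0: "r \<ge> 0" using assms unfolding r_def by auto
  have dD: "d + 1 \<le> D" using Suc by simp
  have up: "real ((x+y) choose Suc (x+d)) = real ((x+y) choose (x+d)) * ((real y - real d) / (real x + real d + 1))"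
    using binomial_Suc_mult[of "x+d" "x+y"] dD assms by (simp add: field_simps)
  have "real ((x+y) choose (x - d)) * (real (x - Suc d) + 1) =
      real ((x+y) choose (x - Suc d)) * (real (x+y) - real (x - Suc d))"
    using binomial_Suc_mult[of "x - Suc d" "x+y"] dD assms by (simp add: Suc_diff_Suc)
  then have down: "real ((x+y) choose (x - Suc d)) = real ((x+y) choose (x - d)) * ((real x - real d) / (real y + real d + 1))"
    using dD assms by (simp add: of_nat_diff field_simps)
  have "r * r \<le> ((real y - real d) / (real y + real d + 1)) * ((real x - real d) / (real x + real d + 1))"
    unfolding r_def using assms dD
    by (intro mult_mono shift_ratio_le) (auto simp: r_def[symmetric] r0)
  then have rr: "r * r \<le> ((real y - real d) / (real x + real d + 1)) * ((real x - real d) / (real y + real d + 1))"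
    by (simp add: field_simps)
  have "real ((x+y) choose x) ^ 2 * r ^ (2 * Suc d) = (real ((x+y) choose x) ^ 2 * r ^ (2*d)) * (r * r)"
    by (simp add: power_add power2_eq_square algebra_simps)
  also have "\<dots> \<le> (real ((x+y) choose (x+d)) * real ((x+y) choose (x-d))) *
      (((real y - real d) / (real x + real d + 1)) * ((real x - real d) / (real y + real d + 1)))"
    using Suc by (intro mult_mono[OF _ rr]) (auto simp: r0)
  also have "\<dots> = real ((x+y) choose (x + Suc d)) * real ((x+y) choose (x - Suc d))"
    using up down by simp
  finally show ?case .
qed

lemma mult_le_add_of_sq_le_mult:
  fixes p q a k :: real
  assumes "p \<ge> 0" "q \<ge> 0" "k^2 * a^2 / 4 \<le> p * q"
  shows "k * a \<le> p + q"
proof -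
  have "(k * a)^2 \<le> 4 * (p * q)"
    using assms by (simp add: power_mult_distrib)
  also have "\<dots> \<le> (p + q)^2"
    using zero_le_power2[of "p - q"] by (simp add: power2_eq_square algebra_simps)
  finally show ?thesis
    using abs_le_square_iff[of "k * a" "p + q"] assms by auto
qed

lemma sum_window_ge:
  fixes a :: "nat \<Rightarrow> real" and k :: real
  assumes "D \<le> i" and pairs: "\<And>d. 1 \<le> d \<Longrightarrow> d \<le> D \<Longrightarrow> k * a i \<le> a (i + d) + a (i - d)"
  shows "(1 + k * real D) * a i \<le> (\<Sum>n\<in>{i - D..i + D}. a n)"
  using assms
proof (induction D)
  case 0
  then show ?case by simp
next
  case (Suc D)
  have window: "{i - Suc D..i + Suc D} = insert (i - Suc D) (insert (i + Suc D) {i - D..i + D})"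
    using Suc.prems by auto
  have "i - Suc D \<notin> insert (i + Suc D) {i - D..i + D}" "i + Suc D \<notin> {i - D..i + D}"
    using Suc.prems by auto
  then have "(\<Sum>n\<in>{i - Suc D..i + Suc D}. a n) =
      a (i - Suc D) + (a (i + Suc D) + (\<Sum>n\<in>{i - D..i + D}. a n))"
    unfolding window by (simp add: sum.insert)
  moreover have "k * a i \<le> a (i + Suc D) + a (i - Suc D)"
    using Suc.prems(2)[of "Suc D"] by simp
  ultimately show ?case using Suc by (simp add: algebra_simps)
qed

lemma vandermonde_pair_gain:
  fixes x1 y1 x2 y2 M D d :: nat and k :: real
  defines "r \<equiv> (real M + 1 - real D) / (real M + real D)"
  assumes M: "M \<le> x1" "M \<le> y1" "M \<le> x2" "M \<le> y2" "D \<le> M"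
    and d: "1 \<le> d" "d \<le> D" and k: "0 \<le> k" "k^2 / 4 \<le> r ^ (4*D)"
  shows "k * (real ((x1+y1) choose x1) * real ((x2+y2) choose x2))
    \<le> real ((x1+y1) choose (x1+d)) * real ((x2+y2) choose (x2-d))
      + real ((x1+y1) choose (x1-d)) * real ((x2+y2) choose (x2+d))"
proof -
  define a where "a = real ((x1+y1) choose x1) * real ((x2+y2) choose x2)"
  have r0: "0 \<le> r" and r1: "r \<le> 1"
    using M d by (auto simp: r_def divide_le_eq_1)
  have "a^2 * r ^ (4*D) \<le> a^2 * r ^ (4*d)"
    using d r0 r1 by (intro mult_left_mono power_decreasing) auto
  also have "\<dots> = (real ((x1+y1) choose x1) ^ 2 * r ^ (2*d)) * (real ((x2+y2) choose x2) ^ 2 * r ^ (2*d))"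
  proof -
    have "r ^ (4*d) = r ^ (2*d) * r ^ (2*d)"
      by (simp flip: power_add)
    then show ?thesis by (simp add: a_def power_mult_distrib)
  qed
  also have "\<dots> \<le> (real ((x1+y1) choose (x1+d)) * real ((x1+y1) choose (x1-d))) *
                 (real ((x2+y2) choose (x2+d)) * real ((x2+y2) choose (x2-d)))"
    unfolding r_def using M d
    by (intro mult_mono binomial_sq_le_shifted_mult) (auto simp: r0[unfolded r_def])
  finally have "k^2 * a^2 / 4 \<le> (real ((x1+y1) choose (x1+d)) * real ((x2+y2) choose (x2-d))) *
      (real ((x1+y1) choose (x1-d)) * real ((x2+y2) choose (x2+d)))"
    using k(2) mult_left_mono[OF k(2), of "a^2"] by (simp add: algebra_simps)
  then show ?thesis
    unfolding a_def by (intro mult_le_add_of_sq_le_mult) auto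
qed

lemma vandermonde_window_gain:
  fixes x1 y1 x2 y2 M D :: nat and k :: real
  assumes M: "M \<le> x1" "M \<le> y1" "M \<le> x2" "M \<le> y2" "D \<le> M"
    and k: "0 \<le> k" "k^2 / 4 \<le> ((real M + 1 - real D) / (real M + real D)) ^ (4*D)"
  shows "(1 + k * real D) * (real ((x1+y1) choose x1) * real ((x2+y2) choose x2))
          \<le> real ((x1+y1+x2+y2) choose (x1+x2))"
proof -
  define a where "a n = real ((x1+y1) choose n) * real ((x2+y2) choose (x1 + x2 - n))" for n
  have "(1 + k * real D) * a x1 \<le> (\<Sum>n\<in>{x1 - D..x1 + D}. a n)"
  proof (rule sum_window_ge)
    fix d assume "1 \<le> d" "d \<le> D"
    then show "k * a x1 \<le> a (x1 + d) + a (x1 - d)"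
      using vandermonde_pair_gain[OF M _ _ k] M by (simp add: a_def)
  qed (use M in simp)
  also have "\<dots> \<le> real ((x1+y1+x2+y2) choose (x1+x2))"
    unfolding a_def using sum_vandermonde_terms_le[of "{x1 - D..x1 + D}" "x1+x2" "x1+y1" "x2+y2"] M
    by (simp add: add.assoc)
  finally show ?thesis by (simp add: a_def)
qed

lemma vandermonde_three_halves_mixed:
  fixes x1 y1 x2 y2 :: nat
  assumes "1 \<le> x1" "1 \<le> y1" "1 \<le> x2" "1 \<le> y2"
  shows "3 / 2 * (real ((x1+y1) choose x1) * real ((x2+y2) choose x2))
          \<le> real ((x1+y1+x2+y2) choose (x1+x2))"
  using vandermonde_window_gain[of 1 x1 y1 x2 y2 1 "1/2"] assms by (simp add: power_divide)

text \<open>The gain from the neighbouring term in which one 1 moves from the second block to the first.\<close>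
lemma vandermonde_three_halves_up:
  fixes x1 y1 x2 y2 :: nat
  assumes "1 \<le> x2" "(real x1 + 1) * (real y2 + 1) \<le> 2 * (real y1 * real x2)"
  shows "3 / 2 * (real ((x1+y1) choose x1) * real ((x2+y2) choose x2))
          \<le> real ((x1+y1+x2+y2) choose (x1+x2))"
proof -
  define A where "A = real ((x1+y1) choose x1) * real ((x2+y2) choose x2)"
  define B where "B = real ((x1+y1) choose Suc x1) * real ((x2+y2) choose (x2 - 1))"
  have e1: "real ((x1+y1) choose Suc x1) * (real x1 + 1) = real ((x1+y1) choose x1) * real y1"
    using binomial_Suc_mult[of x1 "x1+y1"] by simp
  have "real ((x2+y2) choose Suc (x2 - 1)) * (real (x2 - 1) + 1) =
      real ((x2+y2) choose (x2 - 1)) * (real (x2+y2) - real (x2 - 1))"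
    using binomial_Suc_mult[of "x2 - 1" "x2+y2"] by simp
  then have e2: "real ((x2+y2) choose x2) * real x2 = real ((x2+y2) choose (x2 - 1)) * (real y2 + 1)"
    using assms by (simp add: of_nat_diff)
  have "B * ((real x1 + 1) * (real y2 + 1)) = A * (real y1 * real x2)"
    unfolding A_def B_def using e1 e2 by (metis mult.assoc mult.left_commute)
  then have "A * ((real x1 + 1) * (real y2 + 1)) \<le> 2 * (B * ((real x1 + 1) * (real y2 + 1)))"
    using assms by (simp add: A_def mult_left_mono)
  then have "A \<le> 2 * B"
    by (simp add: mult.assoc[symmetric])
  moreover have "A + B \<le> real ((x1+y1+x2+y2) choose (x1+x2))"
    using vandermonde_two_terms_le[of x1 "Suc x1" "x1+x2" "x1+y1" "x2+y2"] assms
    by (simp add: A_def B_def add.assoc)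
  ultimately show ?thesis by (simp add: A_def)
qed

lemma vandermonde_three_halves_down:
  fixes x1 y1 x2 y2 :: nat
  assumes "1 \<le> x1" "(real x2 + 1) * (real y1 + 1) \<le> 2 * (real y2 * real x1)"
  shows "3 / 2 * (real ((x1+y1) choose x1) * real ((x2+y2) choose x2))
          \<le> real ((x1+y1+x2+y2) choose (x1+x2))"
  using vandermonde_three_halves_up[of x1 x2 y1 y2, OF assms] binomial_blocks_commute[of x2 y2 x1 y1]
  by (simp add: mult.commute)

lemma deviation_ratio_le:
  fixes y1 u e :: nat and t :: real
  assumes e: "4 * Suc e \<le> u" and t: "real y1 \<le> t" "real u \<le> t"
  shows "(1 + real u / (3 * t)) * (real y1 + real e + 1) \<le> real (y1 + u) - real e"
proof -
  have "real (4 * Suc e) \<le> real u"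
    using e by (simp only: of_nat_le_iff)
  then have eu: "4 * real e + 4 \<le> real u" by simp
  then have tpos: "t > 0" using t by simp
  have "real u / (3 * t) * (real y1 + real e + 1) \<le> real u / (3 * t) * (t + t / 4)"
    using t eu tpos by (intro mult_left_mono) auto
  also have "\<dots> = 5 * real u / 12"
    using tpos by (simp add: field_simps)
  finally have "real u / (3 * t) * (real y1 + real e + 1) \<le> 5 * real u / 12" .
  moreover have "(1 + real u / (3 * t)) * (real y1 + real e + 1)
      = (real y1 + real e + 1) + real u / (3 * t) * (real y1 + real e + 1)"
    by (simp only: distrib_right mult_1_left)
  ultimately show ?thesis
    using eu by (simp only: of_nat_add)
qed

lemma vandermonde_shift_step:
  fixes x1 y1 x2 y2 u e :: nat and t :: real
  defines "q \<equiv> 1 + real u / (3 * t)"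
  assumes x1: "x1 = y1 + u" and y2: "x2 + u \<le> y2" and e: "4 * Suc e \<le> u"
    and t: "real y1 \<le> t" "real u \<le> t"
  shows "q * (real ((x1+y1) choose (x1 - e)) * real ((x2+y2) choose (x2 + e)))
    \<le> real ((x1+y1) choose (x1 - Suc e)) * real ((x2+y2) choose (x2 + Suc e))"
proof -
  define A where "A = real ((x1+y1) choose (x1 - e))"
  define A' where "A' = real ((x1+y1) choose (x1 - Suc e))"
  define B where "B = real ((x2+y2) choose (x2 + e))"
  define B' where "B' = real ((x2+y2) choose (x2 + Suc e))"
  define X where "X = real x2 + real e + 1"
  define Y where "Y = real y1 + real e + 1"
  have "real (4 * Suc e) \<le> real u"
    using e by (simp only: of_nat_le_iff)
  then have tpos: "t > 0" using t by simp
  have "real ((x1+y1) choose Suc (x1 - Suc e)) * (real (x1 - Suc e) + 1)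
      = real ((x1+y1) choose (x1 - Suc e)) * (real (x1+y1) - real (x1 - Suc e))"
    using binomial_Suc_mult[of "x1 - Suc e" "x1+y1"] by simp
  then have down: "A * (real x1 - real e) = A' * Y"
    using x1 e by (simp add: A_def A'_def Y_def Suc_diff_Suc of_nat_diff algebra_simps)
  have up: "B' * X = B * (real y2 - real e)"
    using binomial_Suc_mult[of "x2 + e" "x2+y2"] y2 e by (simp add: B_def B'_def X_def algebra_simps)
  have "q * Y \<le> real x1 - real e"
    unfolding q_def Y_def using deviation_ratio_le[OF e t] x1 by simp
  moreover have "X \<le> real y2 - real e"
    using y2 e by (simp add: X_def)
  ultimately have ratio: "q * Y * X \<le> (real x1 - real e) * (real y2 - real e)"
    using tpos x1 e by (intro mult_mono) (auto simp: q_def X_def Y_def)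
  have "q * (A * B) * (Y * X) = (A * B) * (q * Y * X)"
    by (simp add: ac_simps)
  also have "\<dots> \<le> (A * B) * ((real x1 - real e) * (real y2 - real e))"
    using ratio by (intro mult_left_mono) (auto simp: A_def B_def)
  also have "\<dots> = (A * (real x1 - real e)) * (B * (real y2 - real e))"
    by (simp add: ac_simps)
  also have "\<dots> = A' * B' * (Y * X)"
    by (simp only: down flip: up) (simp add: ac_simps)
  finally show ?thesis
    unfolding A_def A'_def B_def B'_def
    by (simp add: mult_le_cancel_right_pos X_def Y_def add_pos_pos)
qed

text \<open>
  If the first block has u more ones than zeros and the second block at least u more zeros
  than ones, moving u div 4 ones from the first block to the second gains a factor
  1 + u/(3t) at each step.\<close>
lemma vandermonde_deviation_gain:
  fixes x1 y1 x2 y2 u :: nat and t :: real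
  assumes x1: "x1 = y1 + u" and y2: "x2 + u \<le> y2" and u: "4 \<le> u"
    and t: "real y1 \<le> t" "real u \<le> t"
  shows "(1 + real u / (3 * t)) ^ (u div 4) * (real ((x1+y1) choose x1) * real ((x2+y2) choose x2))
          \<le> real ((x1+y1+x2+y2) choose (x1+x2))"
proof -
  define q where "q = 1 + real u / (3 * t)"
  define a where "a e = real ((x1+y1) choose (x1 - e)) * real ((x2+y2) choose (x2 + e))" for e
  have q0: "q \<ge> 0" using t u by (simp add: q_def)
  have "q ^ e * a 0 \<le> a e" if "e \<le> u div 4" for e
    using that
  proof (induction e)
    case (Suc e)
    then have "q * (q ^ e * a 0) \<le> q * a e"
      using q0 by (intro mult_left_mono) auto
    also have "\<dots> \<le> a (Suc e)"
      unfolding q_def a_def using vandermonde_shift_step[OF x1 y2 _ t] Suc.prems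
      by (simp add: mult.assoc)
    finally show ?case by (simp add: algebra_simps)
  qed simp
  then have "q ^ (u div 4) * a 0 \<le> a (u div 4)" by simp
  also have "a (u div 4) \<le> real ((x1+y1+x2+y2) choose (x1+x2))"
    using vandermonde_term_le[of "x1 - u div 4" "x1+x2" "x1+y1" "x2+y2"] x1
    by (simp add: a_def add.assoc)
  finally show ?thesis by (simp add: q_def a_def)
qed

section \<open>The concatenation inequality for the weight\<close>

text \<open>
  The growth exp ((ln t)^2 / 100) of the weight, flattened to 1 for t \<le> e^L: small blocks
  then satisfy the concatenation inequality trivially, and L is chosen so large that
  all asymptotic estimates hold beyond e^L.\<close>
definition growth :: "real \<Rightarrow> nat \<Rightarrow> real" where
  "growth L t = exp ((max 0 (ln (real (max t 1)) - L))^2 / 100)"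

lemma one_le_growth: "1 \<le> growth L t"
  by (simp add: growth_def)

lemma growth_pos: "0 < growth L t"
  by (simp add: growth_def)

lemma growth_eq_1:
  assumes "real t \<le> exp L" "0 \<le> L"
  shows "growth L t = 1"
proof -
  have "real (max t 1) \<le> exp L"
    using assms by (auto simp: max_def)
  then have "ln (real (max t 1)) \<le> ln (exp L)"
    by (subst ln_le_cancel_iff) auto
  then have "ln (real (max t 1)) \<le> L" by simp
  then show ?thesis by (simp add: growth_def)
qed

lemma growth_le_mult_growth:
  assumes "0 \<le> L" "1 \<le> s" "s \<le> t"
  shows "growth L t \<le> growth L s * exp (ln (real t) * (real t / real s - 1) / 50)"
proof -
  define lt ls where "lt = ln (real t)" and "ls = ln (real s)"
  define A where "A = max 0 (lt - L)"
  define B where "B = max 0 (ls - L)"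
  have "ls \<le> lt" "0 \<le> ls"
    using assms by (auto simp: lt_def ls_def)
  then have "A - B \<le> lt - ls" "0 \<le> B" "B \<le> A" "A \<le> lt"
    using assms unfolding A_def B_def max_def by auto
  moreover have "lt - ls \<le> real t / real s - 1"
    using assms ln_le_minus_one[of "real t / real s"] by (simp add: lt_def ls_def ln_div)
  ultimately have "A - B \<le> real t / real s - 1" and "0 \<le> B" "B \<le> A" "A \<le> ln (real t)"
    by (auto simp: lt_def)
  then have "(A - B) * (A + B) \<le> (real t / real s - 1) * (2 * ln (real t))"
    by (intro mult_mono) auto
  then have "A^2 - B^2 \<le> (real t / real s - 1) * (2 * ln (real t))"
    by (simp add: power2_eq_square algebra_simps)
  then have "A^2 / 100 \<le> B^2 / 100 + ln (real t) * (real t / real s - 1) / 50"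
    by (simp add: field_simps)
  then show ?thesis
    using assms by (simp add: growth_def A_def B_def lt_def ls_def flip: exp_add)
qed

lemma growth_le:
  assumes "0 \<le> L" "1 \<le> t"
  shows "growth L t \<le> exp ((ln (real t))^2 / 100)"
proof -
  have "max 0 (ln (real t) - L) \<le> ln (real t)" using assms by auto
  then have "(max 0 (ln (real t) - L))^2 \<le> (ln (real t))^2" by (intro power_mono) auto
  then show ?thesis using assms by (simp add: growth_def)
qed

lemma growth_ge:
  assumes "0 \<le> L" "exp (2 * L) \<le> real t"
  shows "exp ((ln (real t))^2 / 400) \<le> growth L t"
proof -
  have "1 \<le> real t" using assms one_le_exp_iff[of "2 * L"] by linarith
  moreover have "2 * L \<le> ln (real t)" using assms \<open>1 \<le> real t\<close> by (simp add: ln_ge_iff)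
  ultimately have "(ln (real t) / 2)^2 \<le> (max 0 (ln (real t) - L))^2"
    using assms by (intro power_mono) auto
  then show ?thesis
    using \<open>1 \<le> real t\<close> by (simp add: growth_def power_divide)
qed

text \<open>Weight of a block with x ones and y zeros.\<close>
definition block_weight :: "real \<Rightarrow> nat \<Rightarrow> nat \<Rightarrow> real" where
  "block_weight L x y = real (x + y) * growth L (min x y)"

definition concat_ineq :: "real \<Rightarrow> nat \<Rightarrow> nat \<Rightarrow> nat \<Rightarrow> nat \<Rightarrow> bool" where
  "concat_ineq L x1 y1 x2 y2 \<longleftrightarrow>
     block_weight L (x1 + x2) (y1 + y2) * real ((x1+y1) choose x1) * real ((x2+y2) choose x2)
     \<le> (block_weight L x1 y1 + block_weight L x2 y2 + 1) * real ((x1+y1+x2+y2) choose (x1+x2))"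

lemma length_le_block_weight: "real (x + y) \<le> block_weight L x y"
  using mult_left_mono[OF one_le_growth[of L "min x y"], of "real (x + y)"]
  by (simp add: block_weight_def)

lemma concat_ineq_swap: "concat_ineq L x1 y1 x2 y2 \<Longrightarrow> concat_ineq L x2 y2 x1 y1"
  unfolding concat_ineq_def block_weight_def by (simp add: ac_simps)

lemma concat_ineq_complement: "concat_ineq L y1 x1 y2 x2 \<Longrightarrow> concat_ineq L x1 y1 x2 y2"
proof -
  have "(y1 + x1) choose y1 = (x1 + y1) choose x1" "(y2 + x2) choose y2 = (x2 + y2) choose x2"
    by (simp_all add: binomial_symmetric[of y1] binomial_symmetric[of y2] add.commute)
  moreover have "(y1+x1+y2+x2) choose (y1+y2) = (x1+y1+x2+y2) choose (x1+x2)"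
    using binomial_symmetric[of "x1 + x2" "x1+y1+x2+y2"] by (simp add: ac_simps)
  ultimately show "concat_ineq L y1 x1 y2 x2 \<Longrightarrow> concat_ineq L x1 y1 x2 y2"
    unfolding concat_ineq_def block_weight_def by (simp add: ac_simps min.commute)
qed

lemma concat_ineq_of_gain:
  assumes gain: "growth L (x1 + x2) * (real ((x1+y1) choose x1) * real ((x2+y2) choose x2))
      \<le> real ((x1+y1+x2+y2) choose (x1+x2))"
    and "x1 + x2 \<le> y1 + y2"
  shows "concat_ineq L x1 y1 x2 y2"
proof -
  define C where "C = real ((x1+y1+x2+y2) choose (x1+x2))"
  have "real (x1+y1+x2+y2) \<le> block_weight L x1 y1 + block_weight L x2 y2 + 1"
    using length_le_block_weight[of x1 y1 L] length_le_block_weight[of x2 y2 L] by simp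
  moreover have "block_weight L (x1 + x2) (y1 + y2) = real (x1+y1+x2+y2) * growth L (x1 + x2)"
    using assms(2) by (simp add: block_weight_def min_def ac_simps)
  ultimately have "block_weight L (x1 + x2) (y1 + y2) * real ((x1+y1) choose x1) * real ((x2+y2) choose x2)
      = real (x1+y1+x2+y2) * (growth L (x1 + x2) * (real ((x1+y1) choose x1) * real ((x2+y2) choose x2)))"
    by (simp add: ac_simps)
  also have "\<dots> \<le> real (x1+y1+x2+y2) * C"
    using gain by (intro mult_left_mono) (auto simp: C_def)
  also have "\<dots> \<le> (block_weight L x1 y1 + block_weight L x2 y2 + 1) * C"
    using \<open>real (x1+y1+x2+y2) \<le> _\<close> by (intro mult_right_mono) (auto simp: C_def)
  finally show ?thesis
    by (simp add: concat_ineq_def C_def)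
qed

definition large_enough :: "real \<Rightarrow> bool" where
  "large_enough t \<longleftrightarrow> 6 \<le> ln t \<and> 900 \<le> t \<and> ln t \<le> sqrt t \<and> 4 \<le> t / ln t
     \<and> (ln t)^2 / 100 \<le> (t / (4 * ln t) - 1) / (6 * ln t) \<and> sqrt t \<le> t / 3 - 1
     \<and> 3 * t powr (1/25) \<le> t powr (1/4) / 4 \<and> 4 \<le> t powr (1/4)"

lemma eventually_large_enough: "eventually large_enough at_top"
proof -
  have "eventually (\<lambda>t::real. 6 \<le> ln t) at_top"
    and "eventually (\<lambda>t::real. 900 \<le> t) at_top"
    and "eventually (\<lambda>t::real. ln t \<le> sqrt t) at_top"
    and "eventually (\<lambda>t::real. 4 \<le> t / ln t) at_top"
    and "eventually (\<lambda>t::real. (ln t)^2 / 100 \<le> (t / (4 * ln t) - 1) / (6 * ln t)) at_top"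
    and "eventually (\<lambda>t::real. sqrt t \<le> t / 3 - 1) at_top"
    and "eventually (\<lambda>t::real. 3 * t powr (1/25) \<le> t powr (1/4) / 4) at_top"
    and "eventually (\<lambda>t::real. 4 \<le> t powr (1/4)) at_top"
    by real_asymp+
  then show ?thesis
    unfolding large_enough_def by eventually_elim auto
qed

lemma large_enough_beyond:
  obtains L where "0 \<le> L" "\<And>t. exp L \<le> t \<Longrightarrow> large_enough t"
proof -
  obtain N where N: "\<And>t. N \<le> t \<Longrightarrow> large_enough t"
    using eventually_large_enough by (auto simp: eventually_at_top_linorder)
  show ?thesis
    by (rule that[of "ln (max N 1)"]) (use N in auto)
qed

text \<open>
  Absorbing one 1 of the first block, x1 C(x1+y1, x1) = (x1+y1) C(x1-1+y1, x1-1) and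
  t C(m, t) = m C(m-1, t-1), turns the concatenation inequality into one in which the
  lengths x1 + y1 and m = x1 + y1 + x2 + y2 are replaced by x1 and t = x1 + x2.\<close>
lemma concat_ineq_via_absorption:
  assumes x1: "1 \<le> x1" and "x1 + x2 \<le> y1 + y2"
    and main: "real (x1+x2) * growth L (x1+x2) * (real ((x1 - 1 + y1) choose (x1 - 1)) * real ((x2+y2) choose x2))
               \<le> real x1 * growth L (min x1 y1) * real ((x1 - 1 + y1 + x2 + y2) choose (x1 - 1 + x2))"
  shows "concat_ineq L x1 y1 x2 y2"
proof -
  define t where "t = x1 + x2"
  define m1 where "m1 = x1 + y1"
  define m where "m = x1 + y1 + x2 + y2"
  define P where "P = real ((x1 - 1 + y1) choose (x1 - 1)) * real ((x2+y2) choose x2)"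
  define Q where "Q = real ((x1 - 1 + y1 + x2 + y2) choose (x1 - 1 + x2))"
  have "x1 * (m1 choose x1) = m1 * ((x1 - 1 + y1) choose (x1 - 1))"
    using times_binomial_minus1_eq[of x1 m1] x1 by (simp add: m1_def)
  then have e1: "real x1 * real (m1 choose x1) = real m1 * real ((x1 - 1 + y1) choose (x1 - 1))"
    by (metis of_nat_mult)
  have "t * (m choose t) = m * ((x1 - 1 + y1 + x2 + y2) choose (x1 - 1 + x2))"
    using times_binomial_minus1_eq[of t m] x1 by (simp add: m_def t_def)
  then have e2: "real t * real (m choose t) = real m * Q"
    unfolding Q_def by (metis of_nat_mult)
  have "(real m * growth L t * real (m1 choose x1) * real ((x2+y2) choose x2)) * (real x1 * real t)
      = real m * real m1 * (real t * growth L t * P)"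
    using e1 by (simp add: P_def algebra_simps)
  also have "\<dots> \<le> real m * real m1 * (real x1 * growth L (min x1 y1) * Q)"
    using main by (intro mult_left_mono) (auto simp: P_def Q_def t_def)
  also have "\<dots> = (real m1 * growth L (min x1 y1) * real (m choose t)) * (real x1 * real t)"
    using e2 by (simp add: algebra_simps)
  finally have "real m * growth L t * real (m1 choose x1) * real ((x2+y2) choose x2)
      \<le> real m1 * growth L (min x1 y1) * real (m choose t)"
    using x1 by (simp add: mult_le_cancel_right_pos t_def)
  also have "\<dots> \<le> (block_weight L x1 y1 + block_weight L x2 y2 + 1) * real (m choose t)"
    using one_le_growth[of L "min x2 y2"]
    by (intro mult_right_mono) (auto simp: block_weight_def m1_def)
  finally show ?thesis
    using assms(2) unfolding concat_ineq_def block_weight_def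
    by (simp add: m_def m1_def t_def min_absorb1 add_ac)
qed

lemma growth_le_deviation_gain:
  fixes s u :: nat
  assumes L: "0 \<le> L" and large: "large_enough (real s)"
    and u: "real s / ln (real s) \<le> real u" "u \<le> s"
  shows "growth L s \<le> (1 + real u / (3 * real s)) ^ (u div 4)"
proof -
  define t where "t = real s"
  define x where "x = real u / (3 * t)"
  have lt: "6 \<le> ln t" "4 \<le> t / ln t" "(ln t)^2 / 100 \<le> (t / (4 * ln t) - 1) / (6 * ln t)" "900 \<le> t"
    using large by (auto simp: large_enough_def t_def)
  have tpos: "t > 0" using lt by linarith
  have x: "0 \<le> x" "x \<le> 1/3" "1 / (3 * ln t) \<le> x"
    using tpos u divide_right_mono[OF u(1), of "3 * t"] by (auto simp: x_def t_def divide_simps)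
  have "x * x \<le> x * (1/3)"
    using x by (intro mult_left_mono) auto
  then have "x / 2 \<le> x - x^2"
    using mult_nonneg_nonneg[OF x(1) x(1)] unfolding power2_eq_square by linarith
  also have "\<dots> \<le> ln (1 + x)"
    using x by (intro ln_one_plus_pos_lower_bound) auto
  finally have lnq: "x / 2 \<le> ln (1 + x)" .
  have d: "t / (4 * ln t) - 1 \<le> real (u div 4)"
    using u(1) by (simp add: t_def)
  have "growth L s \<le> exp ((ln t)^2 / 100)"
    using growth_le[OF L, of s] tpos by (simp add: t_def)
  also have "\<dots> \<le> exp ((t / (4 * ln t) - 1) * ((1 / (3 * ln t)) / 2))"
    using lt by (simp add: field_simps)
  also have "\<dots> \<le> exp (real (u div 4) * ln (1 + x))"
    using d x lt lnq by (intro exp_mono mult_mono) auto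
  also have "\<dots> = (1 + x) ^ (u div 4)"
    using x by (simp add: exp_of_nat_mult)
  finally show ?thesis by (simp add: x_def t_def)
qed

lemma of_nat_excess:
  "real (x1 + x2 - min x1 y1 - min x2 y2) = real (x1 + x2) - real (min x1 y1) - real (min x2 y2)"
  by (simp add: of_nat_diff min_def)

text \<open>
  Since x1 + x2 \<le> y1 + y2, at most one block has more ones than zeros, and
  x1 + x2 - min x1 y1 - min x2 y2 is its excess.\<close>
lemma concat_ineq_large_deviation:
  assumes L: "0 \<le> L" and large: "large_enough (real (x1 + x2))"
    and t: "x1 + x2 \<le> y1 + y2"
    and dev: "real (x1 + x2) / ln (real (x1 + x2)) \<le> real (x1 + x2 - min x1 y1 - min x2 y2)"
  shows "concat_ineq L x1 y1 x2 y2"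
proof -
  define u where "u = x1 + x2 - min x1 y1 - min x2 y2"
  define q where "q = 1 + real u / (3 * real (x1 + x2))"
  have lt: "6 \<le> ln (real (x1 + x2))" "4 \<le> real (x1 + x2) / ln (real (x1 + x2))"
    using large by (auto simp: large_enough_def)
  have u: "real (x1 + x2) / ln (real (x1 + x2)) \<le> real u" "u \<le> x1 + x2"
    using dev by (simp_all only: u_def)
  then have u4: "4 \<le> u" using lt by simp
  have ut: "real u \<le> real (x1 + x2)" using u by simp
  have dev_gain: "q ^ (u div 4) * (real ((x1+y1) choose x1) * real ((x2+y2) choose x2))
      \<le> real ((x1+y1+x2+y2) choose (x1+x2))"
  proof (cases "y1 < x1")
    case True
    then have "x1 = y1 + u" "x2 + u \<le> y2" using t by (auto simp: u_def)
    moreover have "real y1 \<le> real (x1 + x2)" using True by simp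
    ultimately show ?thesis
      unfolding q_def by (rule vandermonde_deviation_gain[OF _ _ u4 _ ut])
  next
    case False
    then have "y2 < x2" using u4 by (auto simp: u_def)
    then have "x2 = y2 + u" "x1 + u \<le> y1" using False t by (auto simp: u_def)
    moreover have "real y2 \<le> real (x2 + x1)" using \<open>y2 < x2\<close> by simp
    moreover have "real u \<le> real (x2 + x1)" using ut by (simp add: add.commute)
    ultimately have "q ^ (u div 4) * (real ((x2+y2) choose x2) * real ((x1+y1) choose x1))
        \<le> real ((x2+y2+x1+y1) choose (x2+x1))"
      unfolding q_def add.commute[of x1 x2] by (rule vandermonde_deviation_gain[OF _ _ u4])
    then show ?thesis by (simp add: binomial_blocks_commute mult.commute)
  qed
  have "growth L (x1 + x2) \<le> q ^ (u div 4)"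
    unfolding q_def by (rule growth_le_deviation_gain[OF L large u])
  then have "growth L (x1 + x2) * (real ((x1+y1) choose x1) * real ((x2+y2) choose x2))
      \<le> q ^ (u div 4) * (real ((x1+y1) choose x1) * real ((x2+y2) choose x2))"
    by (rule mult_right_mono) simp
  then show ?thesis
    using concat_ineq_of_gain[OF order_trans[OF _ dev_gain] t] by blast
qed

lemma growth_le_of_le_three_times:
  assumes L: "0 \<le> L" and s: "1 \<le> s" "s \<le> t" "real t \<le> 3 * real s"
  shows "growth L t \<le> growth L s * real t powr (1/25)"
proof -
  have "real t / real s - 1 \<le> 2"
    using s by (simp add: divide_simps)
  moreover have "0 \<le> ln (real t)"
    using s by simp
  ultimately have "ln (real t) * (real t / real s - 1) / 50 \<le> ln (real t) / 25"
    using mult_left_mono[of "real t / real s - 1" 2 "ln (real t)"] by simp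
  then have "exp (ln (real t) * (real t / real s - 1) / 50) \<le> real t powr (1/25)"
    using s by (simp add: powr_def)
  then show ?thesis
    using growth_le_mult_growth[OF L s(1,2)] growth_pos[of L s]
    by (meson mult_left_mono less_imp_le order_trans)
qed

lemma shift_ratio_pow_ge_quarter:
  fixes D M :: nat
  assumes D: "1 \<le> D" and DM: "11 * D^2 \<le> M"
  shows "1/4 \<le> ((real M + 1 - real D) / (real M + real D)) ^ (4*D)"
proof -
  have DMr: "11 * real D ^ 2 \<le> real M"
    using DM by (metis of_nat_le_iff of_nat_mult of_nat_numeral of_nat_power)
  have DD: "real D \<le> real D ^ 2" using D by (simp add: power2_eq_square)
  then have Mpos: "real M > 0" using D DMr by linarith
  have "2 * real D \<le> real M" using DD DMr by linarith
  then have x: "-1 \<le> - (2 * real D / real M)"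
    using Mpos by (simp add: divide_simps)
  have "1/4 \<le> 1 + real (4*D) * (- (2 * real D / real M))"
    using DMr Mpos by (simp add: power2_eq_square divide_simps)
  also have "\<dots> \<le> (1 - 2 * real D / real M) ^ (4*D)"
    using Bernoulli_inequality[OF x, of "4*D"] by simp
  also have "\<dots> \<le> ((real M + 1 - real D) / (real M + real D)) ^ (4*D)"
  proof (rule power_mono)
    have "(real M - 2 * real D) * (real M + real D) \<le> (real M + 1 - real D) * real M"
      by (simp add: algebra_simps power2_eq_square)
    then show "1 - 2 * real D / real M \<le> (real M + 1 - real D) / (real M + real D)"
      using Mpos D by (simp add: divide_simps)
  qed (use x in simp)
  finally show ?thesis .
qed

lemma vandermonde_fourth_root_gain:
  fixes x1 y1 x2 y2 :: nat and s :: real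
  assumes spos: "0 < s" and s: "4 \<le> s powr (1/4)"
    and M: "sqrt s \<le> real x1" "sqrt s \<le> real y1" "sqrt s \<le> real x2" "sqrt s \<le> real y2"
  shows "s powr (1/4) / 4 * (real ((x1+y1) choose x1) * real ((x2+y2) choose x2))
    \<le> real ((x1+y1+x2+y2) choose (x1+x2))"
proof -
  define M where "M = min (min x1 y1) (min x2 y2)"
  define D where "D = nat \<lfloor>s powr (1/4) / 4\<rfloor>"
  have floor: "1 \<le> \<lfloor>s powr (1/4) / 4\<rfloor>"
    using s by (simp add: le_floor_iff)
  then have D1: "1 \<le> D" unfolding D_def by linarith
  have "real D = of_int \<lfloor>s powr (1/4) / 4\<rfloor>"
    unfolding D_def using floor by simp
  then have D: "real D \<le> s powr (1/4) / 4" "s powr (1/4) / 4 \<le> 1 + real D"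
    by linarith+
  have "(s powr (1/4))^2 = sqrt s"
    using spos by (simp add: power2_eq_square flip: powr_add powr_half_sqrt)
  then have "real D ^ 2 \<le> sqrt s / 16"
    using power_mono[OF D(1), of 2] D1 by (simp add: power_divide)
  moreover have "sqrt s \<le> real M"
    using M by (simp add: M_def)
  ultimately have "11 * real D ^ 2 \<le> real M"
    using spos by simp
  then have DM: "11 * D ^ 2 \<le> M"
    by (metis of_nat_le_iff of_nat_mult of_nat_numeral of_nat_power)
  moreover have "D \<le> D ^ 2"
    by (simp add: power2_eq_square)
  ultimately have "D \<le> M" by linarith
  then have "(1 + 1 * real D) * (real ((x1+y1) choose x1) * real ((x2+y2) choose x2))
      \<le> real ((x1+y1+x2+y2) choose (x1+x2))"
    using shift_ratio_pow_ge_quarter[OF D1 DM]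
    by (intro vandermonde_window_gain[where M = M]) (auto simp: M_def)
  moreover have "s powr (1/4) / 4 * (real ((x1+y1) choose x1) * real ((x2+y2) choose x2))
      \<le> (1 + 1 * real D) * (real ((x1+y1) choose x1) * real ((x2+y2) choose x2))"
    using D by (intro mult_right_mono) auto
  ultimately show ?thesis by linarith
qed

lemma concat_ineq_balanced:
  assumes L: "0 \<le> L" and large: "large_enough (real (x1 + x2))"
    and t: "x1 + x2 \<le> y1 + y2" and t2: "min x2 y2 \<le> min x1 y1"
    and dev: "real (x1 + x2 - min x1 y1 - min x2 y2) < real (x1 + x2) / ln (real (x1 + x2))"
    and sq: "sqrt (real (x1 + x2)) \<le> real (min x2 y2)"
  shows "concat_ineq L x1 y1 x2 y2"
proof -
  define t where "t = real (x1 + x2)"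
  define t1 where "t1 = min x1 y1"
  define P where "P = real ((x1 - 1 + y1) choose (x1 - 1)) * real ((x2+y2) choose x2)"
  define Q where "Q = real ((x1 - 1 + y1 + x2 + y2) choose (x1 - 1 + x2))"
  have lt: "6 \<le> ln t" "900 \<le> t" "sqrt t \<le> t / 3 - 1" "3 * t powr (1/25) \<le> t powr (1/4) / 4"
    "4 \<le> t powr (1/4)"
    using large by (auto simp: large_enough_def t_def)
  have "t / ln t \<le> t / 6"
    using lt by (intro divide_left_mono) auto
  moreover have "real (min x2 y2) \<le> real t1"
    using t2 by (simp add: t1_def)
  ultimately have t1: "t / 3 \<le> real t1"
    using dev[folded t_def t1_def] of_nat_excess[of x1 x2 y1 y2, folded t_def t1_def] by linarith
  have t1_le: "real t1 \<le> real x1" "real t1 \<le> real y1"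
    by (simp_all add: t1_def)
  then have "t \<le> 3 * real x1" "1 \<le> real x1"
    using t1 lt by linarith+
  then have x1: "1 \<le> x1" "t \<le> 3 * real x1"
    by simp_all
  have "sqrt t \<le> real x1 - 1" "sqrt t \<le> real y1"
    using t1 t1_le lt by linarith+
  then have "sqrt t \<le> real (x1 - 1)" "sqrt t \<le> real y1"
    using x1 by (simp_all add: of_nat_diff)
  moreover have "sqrt t \<le> real x2" "sqrt t \<le> real y2"
    using sq by (simp_all add: t_def)
  ultimately have gain: "t powr (1/4) / 4 * P \<le> Q"
    unfolding P_def Q_def using lt by (intro vandermonde_fourth_root_gain) auto
  have "1 \<le> real t1" "t \<le> 3 * real t1"
    using t1 lt by linarith+
  moreover have "t1 \<le> x1 + x2"
    by (simp add: t1_def min_le_iff_disj)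
  ultimately have growth: "growth L (x1 + x2) \<le> growth L t1 * t powr (1/25)"
    unfolding t_def by (intro growth_le_of_le_three_times[OF L]) auto
  have "t * growth L (x1 + x2) \<le> (3 * real x1) * (growth L t1 * t powr (1/25))"
    by (rule mult_mono[OF x1(2) growth]) (auto simp: less_imp_le[OF growth_pos])
  then have "t * growth L (x1 + x2) * P \<le> real x1 * growth L t1 * ((3 * t powr (1/25)) * P)"
    using mult_right_mono[of _ _ P] by (simp add: P_def algebra_simps)
  also have "\<dots> \<le> real x1 * growth L t1 * Q"
    using order_trans[OF mult_right_mono[OF lt(4)] gain]
    by (intro mult_left_mono) (auto simp: P_def less_imp_le[OF growth_pos])
  finally show ?thesis
    by (intro concat_ineq_via_absorption[OF x1(1) t]) (simp add: t_def t1_def P_def Q_def)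
qed

lemma growth_le_of_close:
  assumes L: "0 \<le> L" and s: "1 \<le> s" "s \<le> t" "4 * real t \<le> 5 * real s"
    and close: "ln (real t) * (real t - real s) \<le> 2 * real t"
  shows "growth L t \<le> 11/10 * growth L s"
proof -
  have spos: "0 < real s" and tpos: "0 < real t" and lnt: "0 \<le> ln (real t)"
    using s by auto
  have "(real t - real s) * (4 * real t) \<le> (real t - real s) * (5 * real s)"
    using s by (intro mult_left_mono) auto
  then have "real t / real s - 1 \<le> 5/4 * ((real t - real s) / real t)"
    using spos tpos by (simp add: field_simps)
  then have "ln (real t) * (real t / real s - 1) \<le> ln (real t) * (5/4 * ((real t - real s) / real t))"
    using lnt by (rule mult_left_mono)
  also have "\<dots> = 5/4 * (ln (real t) * (real t - real s) / real t)"
    by simp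
  also have "\<dots> \<le> 5/4 * 2"
    using close tpos by (simp add: pos_divide_le_eq)
  finally have "ln (real t) * (real t / real s - 1) / 50 \<le> 5/4 * 2 / 50"
    by (rule divide_right_mono) simp
  then have "exp (ln (real t) * (real t / real s - 1) / 50) \<le> exp (1/20)"
    by simp
  also have "exp (1/20::real) \<le> 11/10"
    using exp_bound_lemma[of "1/20::real"] by simp
  finally have "growth L s * exp (ln (real t) * (real t / real s - 1) / 50) \<le> growth L s * (11/10)"
    using growth_pos[of L s] by (intro mult_left_mono) auto
  then show ?thesis
    using growth_le_mult_growth[OF L s(1,2)] by simp
qed

lemma vandermonde_three_halves:
  fixes x1 y1 x2 y2 :: nat
  assumes "2 \<le> x1" "1 \<le> y1" "x1 + x2 \<le> y1 + y2" "\<not> (x2 = 0 \<and> x1 \<le> y1)"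
  shows "3/2 * (real ((x1 - 1 + y1) choose (x1 - 1)) * real ((x2+y2) choose x2))
    \<le> real ((x1 - 1 + y1 + x2 + y2) choose (x1 - 1 + x2))"
proof (cases "x2 = 0")
  case True
  then have "y1 < x1" "1 \<le> y2" using assms by auto
  then have "real y1 \<le> real (x1 - 1)" "real (x1 - 1) \<le> real y2 * real (x1 - 1)"
    using mult_right_mono[of 1 "real y2" "real (x1 - 1)"] by (simp_all add: of_nat_diff)
  then have "(real 0 + 1) * (real y1 + 1) \<le> 2 * (real y2 * real (x1 - 1))"
    using assms(2) by simp
  then show ?thesis
    using vandermonde_three_halves_down[of "x1 - 1" 0 y1 y2] True assms by simp
next
  case x2: False
  show ?thesis
  proof (cases "y2 = 0")
    case True
    then have "x1 \<le> y1" "1 \<le> x2" using assms x2 by auto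
    then have "real x1 \<le> real y1" "real y1 \<le> real y1 * real x2"
      using mult_left_mono[of 1 "real x2" "real y1"] by simp_all
    then have "real x1 \<le> 2 * (real y1 * real x2)"
      by linarith
    then have "(real (x1 - 1) + 1) * (real 0 + 1) \<le> 2 * (real y1 * real x2)"
      using assms(1) by (simp add: of_nat_diff)
    then show ?thesis
      using vandermonde_three_halves_up[of x2 "x1 - 1" 0 y1] True x2 by simp
  next
    case False
    then show ?thesis
      using vandermonde_three_halves_mixed[of "x1 - 1" y1 x2 y2] assms x2 by simp
  qed
qed

lemma bounds_of_sub_le_sqrt_add_div_ln:
  fixes t s :: real
  assumes lt: "6 \<le> ln t" "900 \<le> t" "ln t \<le> sqrt t" and w: "t - s \<le> sqrt t + t / ln t"
  shows "4 * t / 5 \<le> s" "ln t * (t - s) \<le> 2 * t"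
proof -
  have "sqrt (900::real) = 30"
    by (rule real_sqrt_unique) auto
  then have "30 \<le> sqrt t"
    using real_sqrt_le_mono[OF lt(2)] by simp
  then have "30 * sqrt t \<le> sqrt t * sqrt t"
    using lt by (intro mult_right_mono) auto
  moreover have "t / ln t \<le> t / 6"
    using lt by (intro divide_left_mono) auto
  ultimately show "4 * t / 5 \<le> s"
    using w lt by simp
  have "ln t * (t - s) \<le> ln t * (sqrt t + t / ln t)"
    using w lt by (intro mult_left_mono) auto
  also have "\<dots> = ln t * sqrt t + t"
    using lt by (simp add: distrib_left)
  also have "ln t * sqrt t \<le> sqrt t * sqrt t"
    using lt by (intro mult_right_mono) auto
  finally show "ln t * (t - s) \<le> 2 * t"
    using lt by simp
qed

lemma concat_ineq_skewed:
  assumes L: "0 \<le> L" and large: "large_enough (real (x1 + x2))"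
    and t: "x1 + x2 \<le> y1 + y2" and t2: "min x2 y2 \<le> min x1 y1"
    and dev: "real (x1 + x2 - min x1 y1 - min x2 y2) < real (x1 + x2) / ln (real (x1 + x2))"
    and sq: "real (min x2 y2) < sqrt (real (x1 + x2))"
  shows "concat_ineq L x1 y1 x2 y2"
proof -
  define t where "t = real (x1 + x2)"
  define t1 where "t1 = min x1 y1"
  define P where "P = real ((x1 - 1 + y1) choose (x1 - 1)) * real ((x2+y2) choose x2)"
  define Q where "Q = real ((x1 - 1 + y1 + x2 + y2) choose (x1 - 1 + x2))"
  have lt: "6 \<le> ln t" "900 \<le> t" "ln t \<le> sqrt t"
    using large by (auto simp: large_enough_def t_def)
  have "t - real t1 \<le> sqrt t + t / ln t"
    using dev[folded t_def t1_def] sq[folded t_def] of_nat_excess[of x1 x2 y1 y2, folded t_def t1_def]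
    by linarith
  then have t1: "4 * t / 5 \<le> real t1" and close: "ln t * (t - real t1) \<le> 2 * t"
    using bounds_of_sub_le_sqrt_add_div_ln lt by blast+
  have "1 \<le> real t1" "t1 \<le> x1 + x2"
    using t1 lt by (auto simp: t1_def min_le_iff_disj)
  then have growth: "growth L (x1 + x2) \<le> 11/10 * growth L t1"
    using t1 close unfolding t_def by (intro growth_le_of_close[OF L]) auto
  have t1_le: "real t1 \<le> real x1" "real t1 \<le> real y1"
    by (simp_all add: t1_def)
  then have x1: "2 \<le> x1" "1 \<le> y1"
    using t1 lt by linarith+
  have "t * growth L (x1 + x2) * P \<le> real x1 * growth L t1 * Q"
  proof (cases "x2 = 0 \<and> x1 \<le> y1")
    case True
    then have "t = real x1" "t1 = x1" by (auto simp: t_def t1_def)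
    moreover have "P \<le> Q"
      using binomial_mult_le_binomial_add[of "x1 - 1" y1 0 y2] True by (simp add: P_def Q_def)
    ultimately show ?thesis
      using True mult_left_mono[of P Q "real x1 * growth L x1"] growth_pos[of L x1] by simp
  next
    case False
    have "t * growth L (x1 + x2) \<le> (11/15 * t) * growth L t1 * (3/2)"
      using mult_left_mono[OF growth, of t] lt by simp
    also have "\<dots> \<le> real x1 * growth L t1 * (3/2)"
      using t1 t1_le lt by (intro mult_right_mono) (auto simp: less_imp_le[OF growth_pos])
    finally have "t * growth L (x1 + x2) * P \<le> real x1 * growth L t1 * (3/2 * P)"
      using mult_right_mono[of _ _ P] by (simp add: P_def mult.assoc)
    also have "\<dots> \<le> real x1 * growth L t1 * Q"
      using vandermonde_three_halves[OF x1 t False]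
      by (intro mult_left_mono) (auto simp: P_def Q_def less_imp_le[OF growth_pos])
    finally show ?thesis .
  qed
  then show ?thesis
    using x1 by (intro concat_ineq_via_absorption[OF _ t]) (simp_all add: t_def t1_def P_def Q_def)
qed

lemma concat_ineq_oriented:
  assumes L: "0 \<le> L" and large: "\<And>s. exp L \<le> s \<Longrightarrow> large_enough s"
    and t: "x1 + x2 \<le> y1 + y2" and t2: "min x2 y2 \<le> min x1 y1"
  shows "concat_ineq L x1 y1 x2 y2"
proof (cases "real (x1 + x2) \<le> exp L")
  case True
  then show ?thesis
    using binomial_mult_le_binomial_add[of x1 y1 x2 y2] growth_eq_1[OF True L]
    by (intro concat_ineq_of_gain[OF _ t]) simp
next
  case False
  then have large_t: "large_enough (real (x1 + x2))"
    using large by simp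
  consider (deviation) "real (x1 + x2) / ln (real (x1 + x2)) \<le> real (x1 + x2 - min x1 y1 - min x2 y2)"
    | (balanced) "real (x1 + x2 - min x1 y1 - min x2 y2) < real (x1 + x2) / ln (real (x1 + x2))"
        "sqrt (real (x1 + x2)) \<le> real (min x2 y2)"
    | (skewed) "real (x1 + x2 - min x1 y1 - min x2 y2) < real (x1 + x2) / ln (real (x1 + x2))"
        "real (min x2 y2) < sqrt (real (x1 + x2))"
    by linarith
  then show ?thesis
  proof cases
    case deviation
    then show ?thesis by (rule concat_ineq_large_deviation[OF L large_t t])
  next
    case balanced
    then show ?thesis by (rule concat_ineq_balanced[OF L large_t t t2])
  next
    case skewed
    then show ?thesis by (rule concat_ineq_skewed[OF L large_t t t2])
  qed
qed

lemma concat_ineq_holds: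
  assumes L: "0 \<le> L" and large: "\<And>s. exp L \<le> s \<Longrightarrow> large_enough s"
  shows "concat_ineq L x1 y1 x2 y2"
proof -
  have oriented: "concat_ineq L a b c d" if "a + c \<le> b + d" for a b c d
  proof (cases "min c d \<le> min a b")
    case True
    show ?thesis by (rule concat_ineq_oriented[OF L large that True])
  next
    case False
    then have "concat_ineq L c d a b"
      using that by (intro concat_ineq_oriented[OF L large]) auto
    then show ?thesis by (rule concat_ineq_swap)
  qed
  show ?thesis
  proof (cases "x1 + x2 \<le> y1 + y2")
    case True
    then show ?thesis by (rule oriented)
  next
    case False
    then have "concat_ineq L y1 x1 y2 x2" by (intro oriented) simp
    then show ?thesis by (rule concat_ineq_complement)
  qed
qed

section \<open>Lower bound for the binomial languages\<close>

lemma block_weight_le_rpn: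
  assumes L: "0 \<le> L" and large: "\<And>s. exp L \<le> s \<Longrightarrow> large_enough s" and "k \<le> n"
  shows "block_weight L k (n - k) \<le> real (rpn (binomial_lang n k))"
proof -
  obtain r where r: "lang r = binomial_lang n k" "nodes r = rpn (binomial_lang n k)"
    using rpn_attained[OF finite_binomial_lang binomial_lang_nonempty[OF \<open>k \<le> n\<close>]] .
  have "block_weight L k (n - k) * real (card (lang r)) \<le> real (nodes r) * real (n choose k)"
  proof (rule weight_mult_card_lang_le[where G = "\<lambda>m j. block_weight L j (m - j)"])
    show "block_weight L j (1 - j) \<le> 1" if "j \<le> 1" for j
      using that growth_eq_1[OF _ L, of 0] by (cases j) (auto simp: block_weight_def)
    show "block_weight L (j1 + j2) (m1 + m2 - (j1 + j2)) * real (m1 choose j1) * real (m2 choose j2)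
        \<le> (block_weight L j1 (m1 - j1) + block_weight L j2 (m2 - j2) + 1) * real ((m1 + m2) choose (j1 + j2))"
      if "j1 \<le> m1" "j2 \<le> m2" for m1 j1 m2 j2
      using concat_ineq_holds[OF L large, of j1 "m1 - j1" j2 "m2 - j2"] that
      by (simp add: concat_ineq_def)
  qed (use r in \<open>auto simp: block_weight_def less_imp_le[OF growth_pos]\<close>)
  moreover have "card (lang r) = n choose k" "0 < n choose k"
    using r \<open>k \<le> n\<close> by (simp_all add: card_binomial_lang)
  ultimately show ?thesis
    using r by (simp add: mult_le_cancel_right_pos)
qed

theorem corollary5p1:
  shows "\<exists>c::real. c > 0 \<and> (\<exists>k0::nat. \<forall>n k::nat. k0 \<le> k \<and> 2 * k \<le> n \<longrightarrow>
           real (rpn (binomial_lang n k)) \<ge> real n * real k powr (c * log 2 (real k)))"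
proof -
  obtain L where L: "0 \<le> L" and large: "\<And>t. exp L \<le> t \<Longrightarrow> large_enough t"
    using large_enough_beyond by blast
  have "real n * real k powr (ln 2 / 400 * log 2 (real k)) \<le> real (rpn (binomial_lang n k))"
    if k: "nat \<lceil>exp (2 * L)\<rceil> \<le> k" and n: "2 * k \<le> n" for n k
  proof -
    have kL: "exp (2 * L) \<le> real k"
      using k by linarith
    moreover have "0 < exp (2 * L)" by simp
    ultimately have "0 < k" by linarith
    then have "real k powr (ln 2 / 400 * log 2 (real k)) = exp ((ln (real k))^2 / 400)"
      by (simp add: powr_def log_def power2_eq_square)
    also have "\<dots> \<le> growth L k"
      by (rule growth_ge[OF L kL])
    finally have "real n * real k powr (ln 2 / 400 * log 2 (real k)) \<le> block_weight L k (n - k)"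
      using n by (simp add: block_weight_def mult_left_mono)
    also have "\<dots> \<le> real (rpn (binomial_lang n k))"
      using n by (intro block_weight_le_rpn[OF L large]) auto
    finally show ?thesis .
  qed
  then show ?thesis
    by (intro exI[of _ "ln 2 / 400"] conjI exI[of _ "nat \<lceil>exp (2 * L)\<rceil>"] allI impI) auto
qed
end
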